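(* If $G$ is an optimal digraph and $(u,v)$ is a shortest non-edge of $G$, then $N^+(v) \cap N^-(u) \neq \emptyset$.
   Context: Digraphs are finite, loopless, with at most one edge $uv$ per ordered pair. $N^+(v)=\{u: vu\in E(G)\}$, $N^-(v)=\{u:uv\in E(G)\}$. A digraph is $2$-free if no distinct $u,v$ have both $uv,vu$ as edges. A circular interval digraph is a digraph together with a fixed arrangement of its vertices in a circle such that for all distinct $u,v,w$ in clockwise order with $uw\in E(G)$, also $uv,vw\in E(G)$. For distinct $u,v$, $d(u,v) = 1 + |\{w: u,w,v \text{ distinct, in clockwise order}\}|$; this is the length of the ordered pair $uv$. A non-edge is an ordered pair $(u,v)$ of distinct vertices with neither $uv$ nor $vu$ an edge; its length is $d(u,v)$. $\alpha_G$ is the minimum length of a non-edge ($\infty$ if none); a shortest non-edge is a non-edge of length $\alpha_G$. $\xi(G)$ is the number of pairs $(uv,(w,x))$ with $uv\in E(G)$, $(w,x)$ a non-edge, $d(u,v)>d(w,x)$. $\tilde P_3(G)$ is the number of triples $(a,b,c)$ of distinct vertices with $ab,bc\in E(G)$ and $ac,ca\notin E(G)$. For fixed $n\ge 4$, $G$ is optimal if it is a $2$-free circular interval digraph on $n$ vertices maximizing $\tilde P_3$ among all such digraphs and, subject to this, minimizing $\xi(G)$. *)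

theory Defs
  imports Main
begin

text \<open>Vertices are the positions 0,...,n-1 arranged clockwise in increasing order
  around a circle; a digraph is a relation E on them.\<close>

definition dist_cw :: "nat \<Rightarrow> nat \<Rightarrow> nat \<Rightarrow> nat" where
  "dist_cw n u v = nat ((int v - int u) mod int n)"

definition is_digraph :: "nat \<Rightarrow> (nat \<Rightarrow> nat \<Rightarrow> bool) \<Rightarrow> bool" where
  "is_digraph n E \<longleftrightarrow> (\<forall>u v. E u v \<longrightarrow> u < n \<and> v < n \<and> u \<noteq> v)"

definition two_free :: "nat \<Rightarrow> (nat \<Rightarrow> nat \<Rightarrow> bool) \<Rightarrow> bool" where
  "two_free n E \<longleftrightarrow> (\<forall>u<n. \<forall>v<n. u \<noteq> v \<longrightarrow> \<not> (E u v \<and> E v u))"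

definition cw_order :: "nat \<Rightarrow> nat \<Rightarrow> nat \<Rightarrow> nat \<Rightarrow> bool" where
  "cw_order n u v w \<longleftrightarrow> u < n \<and> v < n \<and> w < n \<and> u \<noteq> v \<and> v \<noteq> w \<and> u \<noteq> w
     \<and> dist_cw n u v < dist_cw n u w"

definition circ_interval :: "nat \<Rightarrow> (nat \<Rightarrow> nat \<Rightarrow> bool) \<Rightarrow> bool" where
  "circ_interval n E \<longleftrightarrow> is_digraph n E \<and>
     (\<forall>u v w. cw_order n u v w \<and> E u w \<longrightarrow> E u v \<and> E v w)"

definition non_edge :: "nat \<Rightarrow> (nat \<Rightarrow> nat \<Rightarrow> bool) \<Rightarrow> nat \<Rightarrow> nat \<Rightarrow> bool" where
  "non_edge n E u v \<longleftrightarrow> u < n \<and> v < n \<and> u \<noteq> v \<and> \<not> E u v \<and> \<not> E v u"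

definition shortest_non_edge :: "nat \<Rightarrow> (nat \<Rightarrow> nat \<Rightarrow> bool) \<Rightarrow> nat \<Rightarrow> nat \<Rightarrow> bool" where
  "shortest_non_edge n E u v \<longleftrightarrow> non_edge n E u v \<and>
     (\<forall>w x. non_edge n E w x \<longrightarrow> dist_cw n u v \<le> dist_cw n w x)"

definition xi :: "nat \<Rightarrow> (nat \<Rightarrow> nat \<Rightarrow> bool) \<Rightarrow> nat" where
  "xi n E = card {((u,v),(w,x)). u < n \<and> v < n \<and> E u v \<and> non_edge n E w x
                   \<and> dist_cw n u v > dist_cw n w x}"

definition P3t :: "nat \<Rightarrow> (nat \<Rightarrow> nat \<Rightarrow> bool) \<Rightarrow> nat" where
  "P3t n E = card {(a,b,c). a < n \<and> b < n \<and> c < n \<and> a \<noteq> b \<and> b \<noteq> c \<and> a \<noteq> c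
                   \<and> E a b \<and> E b c \<and> \<not> E a c \<and> \<not> E c a}"

definition admissible :: "nat \<Rightarrow> (nat \<Rightarrow> nat \<Rightarrow> bool) \<Rightarrow> bool" where
  "admissible n E \<longleftrightarrow> circ_interval n E \<and> two_free n E"

definition optimal :: "nat \<Rightarrow> (nat \<Rightarrow> nat \<Rightarrow> bool) \<Rightarrow> bool" where
  "optimal n E \<longleftrightarrow> admissible n E
     \<and> (\<forall>H. admissible n H \<longrightarrow> P3t n H \<le> P3t n E)
     \<and> (\<forall>H. admissible n H \<and> P3t n H = P3t n E \<longrightarrow> xi n E \<le> xi n H)"

end

theory Submission imports Defs begin

(* Let E be optimal with shortest non-edge (u,v) of length alpha, and suppose
   that no vertex w has v -> w -> u.  We show that E is not P3-maximal, contradicting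
   optimality.

   Adding the edge u -> v keeps E a 2-free circular interval digraph.  It destroys only
   induced paths u -> b -> v, and every such b is an out-neighbour of u at distance < alpha
   from u.  Reflecting such a b in u gives a vertex r(b) with r(b) -> u that is
   non-adjacent to v, so each lost path u -> b -> v is paid for by a new path
   r(b) -> u -> v.  One further new path comes from the clockwise successor x of v:
   (u,v,x) if v -> x; otherwise alpha = 1, nothing is lost, and we either gain a path
   a -> u -> v from an in-neighbour a of u, or (if u has none) add v -> x as well. *)

section \<open>Circular distance\<close>

lemma dist_cw_explicit:
  assumes "u < n" "v < n"
  shows "dist_cw n u v = (if u \<le> v then v - u else n + v - u)"
proof (cases "u \<le> v")
  case True
  then have "(int v - int u) mod int n = int v - int u"
    using assms by (intro mod_pos_pos_trivial) auto
  then show ?thesis using True by (simp add: dist_cw_def)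
next
  case False
  have "(int v - int u) mod int n = (int v - int u + int n) mod int n" by simp
  also have "\<dots> = int v - int u + int n"
    using False assms by (intro mod_pos_pos_trivial) auto
  finally show ?thesis using False by (simp add: dist_cw_def)
qed

lemma cw_order_explicit:
  assumes "a < n" "b < n" "c < n"
  shows "cw_order n a b c \<longleftrightarrow> a \<noteq> b \<and> b \<noteq> c \<and> a \<noteq> c \<and>
    (if a \<le> b then b - a else n + b - a) < (if a \<le> c then c - a else n + c - a)"
  using assms unfolding cw_order_def by (simp add: dist_cw_explicit)

definition reflect :: "nat \<Rightarrow> nat \<Rightarrow> nat \<Rightarrow> nat" where
  "reflect n u b = nat ((2 * int u - int b) mod int n)"

lemma reflect_int:
  assumes "n > 0"
  shows "int (reflect n u b) = (2 * int u - int b) mod int n"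
  using assms unfolding reflect_def by simp

lemma reflect_lt: "n > 0 \<Longrightarrow> reflect n u b < n"
  unfolding reflect_def by (simp add: nat_less_iff)

lemma dist_reflect: "n > 0 \<Longrightarrow> dist_cw n (reflect n u b) u = dist_cw n u b"
proof -
  assume "n > 0"
  have "(int u - int (reflect n u b)) mod int n = (int u - (2 * int u - int b)) mod int n"
    unfolding reflect_int[OF \<open>n > 0\<close>] by (rule mod_diff_right_eq)
  also have "\<dots> = (int b - int u) mod int n" by (simp add: algebra_simps)
  finally show ?thesis unfolding dist_cw_def by simp
qed

lemma reflect_involution:
  assumes "b < n"
  shows "reflect n u (reflect n u b) = b"
proof -
  have n: "n > 0" using assms by simp
  have "int (reflect n u (reflect n u b)) = (2 * int u - int (reflect n u b)) mod int n"
    by (rule reflect_int[OF n])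
  also have "\<dots> = (2 * int u - (2 * int u - int b)) mod int n"
    unfolding reflect_int[OF n] by (rule mod_diff_right_eq)
  also have "\<dots> = int b" using assms by simp
  finally show ?thesis by simp
qed

lemma inj_on_reflect: "inj_on (reflect n u) {..<n}"
  by (metis inj_on_inverseI lessThan_iff reflect_involution)

definition succ_cw :: "nat \<Rightarrow> nat \<Rightarrow> nat" where
  "succ_cw n v = (if Suc v < n then Suc v else 0)"

lemma succ_cw_facts:
  assumes "v < n" "n \<ge> 2"
  shows "succ_cw n v < n" "succ_cw n v \<noteq> v" "dist_cw n v (succ_cw n v) = 1"
  using assms unfolding succ_cw_def by (auto simp: dist_cw_explicit)

lemma cw_order_succ:
  assumes "v < n" "c < n" "c \<noteq> v" "c \<noteq> succ_cw n v"
  shows "cw_order n v (succ_cw n v) c"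
  using assms unfolding succ_cw_def by (auto simp: cw_order_explicit split: if_splits)

section \<open>Counting\<close>

lemma card_less_by_exchange:
  fixes SE SH L G :: "'a set"
  assumes "finite SH" "SE - SH \<subseteq> L" "G \<subseteq> SH" "G \<inter> SE = {}" "finite L"
    and "card L < card G"
  shows "card SE < card SH"
proof -
  have fG: "finite G" using assms(1,3) finite_subset by blast
  have "SE \<subseteq> (SH - G) \<union> L" using assms(2,4) by blast
  then have "card SE \<le> card ((SH - G) \<union> L)" using assms by (intro card_mono) auto
  also have "\<dots> \<le> card (SH - G) + card L" by (rule card_Un_le)
  also have "card (SH - G) = card SH - card G" using assms(3) fG by (simp add: card_Diff_subset)
  finally show ?thesis using assms(6) card_mono[OF assms(1,3)] by linarith
qed

definition P3_set :: "nat \<Rightarrow> (nat \<Rightarrow> nat \<Rightarrow> bool) \<Rightarrow> (nat \<times> nat \<times> nat) set" where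
  "P3_set n E = {(a,b,c). a < n \<and> b < n \<and> c < n \<and> a \<noteq> b \<and> b \<noteq> c \<and> a \<noteq> c
                   \<and> E a b \<and> E b c \<and> \<not> E a c \<and> \<not> E c a}"

lemma P3t_card: "P3t n E = card (P3_set n E)"
  unfolding P3t_def P3_set_def ..

lemma finite_P3_set: "finite (P3_set n E)"
  by (rule finite_subset[of _ "{0..<n} \<times> {0..<n} \<times> {0..<n}"]) (auto simp: P3_set_def)

lemma admissibleI:
  assumes "\<And>a b. H a b \<Longrightarrow> a < n \<and> b < n \<and> a \<noteq> b"
    and "\<And>a b. H a b \<Longrightarrow> \<not> H b a"
    and "\<And>a b c. cw_order n a b c \<Longrightarrow> H a c \<Longrightarrow> H a b \<and> H b c"
  shows "admissible n H"
  using assms unfolding admissible_def circ_interval_def is_digraph_def two_free_def by blast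

definition add_edge :: "(nat \<Rightarrow> nat \<Rightarrow> bool) \<Rightarrow> nat \<Rightarrow> nat \<Rightarrow> nat \<Rightarrow> nat \<Rightarrow> bool" where
  "add_edge E p q a b \<longleftrightarrow> E a b \<or> (a = p \<and> b = q)"

section \<open>A shortest non-edge without a return path\<close>

locale no_return_path =
  fixes n :: nat and E :: "nat \<Rightarrow> nat \<Rightarrow> bool" and u v :: nat
  assumes n_ge: "n \<ge> 3"
    and adm: "admissible n E"
    and shortest: "shortest_non_edge n E u v"
    and no_path: "\<not> (\<exists>w<n. E v w \<and> E w u)"
begin

lemma edge_vertices: "E a b \<Longrightarrow> a < n \<and> b < n \<and> a \<noteq> b"
  using adm unfolding admissible_def circ_interval_def is_digraph_def by blast

lemma interval: "cw_order n a b c \<Longrightarrow> E a c \<Longrightarrow> E a b \<and> E b c"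
  using adm unfolding admissible_def circ_interval_def by blast

lemma antisym: "E a b \<Longrightarrow> \<not> E b a"
  using adm edge_vertices unfolding admissible_def two_free_def by blast

lemma uv: "u < n" "v < n" "u \<noteq> v" "\<not> E u v" "\<not> E v u"
  using shortest unfolding shortest_non_edge_def non_edge_def by auto

lemma no_path_via: "E v w \<Longrightarrow> \<not> E w u"
  using no_path edge_vertices by blast

lemma short_adjacent:
  "a < n \<Longrightarrow> b < n \<Longrightarrow> a \<noteq> b \<Longrightarrow> dist_cw n a b < dist_cw n u v \<Longrightarrow> E a b \<or> E b a"
  using shortest unfolding shortest_non_edge_def non_edge_def by force

text \<open>Since (v,u) is a non-edge as well, alpha is at most half the circle.\<close>

lemma alpha_half: "2 * dist_cw n u v \<le> n"
proof -
  have "dist_cw n u v \<le> dist_cw n v u"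
    using shortest uv unfolding shortest_non_edge_def non_edge_def by auto
  then show ?thesis using uv by (auto simp: dist_cw_explicit split: if_splits)
qed

lemma out_u_short: "E u b \<Longrightarrow> dist_cw n u b < dist_cw n u v"
proof (rule ccontr)
  assume e: "E u b" and "\<not> dist_cw n u b < dist_cw n u v"
  moreover have "b < n" "b \<noteq> u" "b \<noteq> v" using edge_vertices[OF e] uv e by auto
  ultimately have "cw_order n u v b" using uv by (auto simp: cw_order_explicit dist_cw_explicit split: if_splits)
  then show False using interval e uv by blast
qed

lemma inside_arc:
  assumes "cw_order n u b v"
  shows "E u b" "E b v"
proof -
  have b: "b < n" "b \<noteq> u" "b \<noteq> v" using assms unfolding cw_order_def by auto
  have d1: "dist_cw n u b < dist_cw n u v" using assms unfolding cw_order_def by auto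
  have d2: "dist_cw n b v < dist_cw n u v"
    using assms uv b by (auto simp: cw_order_explicit dist_cw_explicit split: if_splits)
  have "\<not> E b u"
  proof
    assume "E b u"
    moreover have "cw_order n b v u" using assms uv b by (auto simp: cw_order_explicit split: if_splits)
    ultimately show False using interval uv by blast
  qed
  then show "E u b" using short_adjacent[OF uv(1) b(1) _ d1] b by auto
  have "\<not> E v b"
  proof
    assume "E v b"
    moreover have "cw_order n v u b" using assms uv b by (auto simp: cw_order_explicit split: if_splits)
    ultimately show False using interval uv by blast
  qed
  then show "E b v" using short_adjacent[OF b(1) uv(2) _ d2] b by auto
qed

lemma add_uv_admissible: "admissible n (add_edge E u v)"
proof (rule admissibleI)
  fix a b assume "add_edge E u v a b"
  then show "a < n \<and> b < n \<and> a \<noteq> b" using edge_vertices uv unfolding add_edge_def by auto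
next
  fix a b assume "add_edge E u v a b"
  then show "\<not> add_edge E u v b a" using antisym uv unfolding add_edge_def by blast
next
  fix a b c assume asm: "cw_order n a b c" "add_edge E u v a c"
  show "add_edge E u v a b \<and> add_edge E u v b c"
  proof (cases "E a c")
    case True
    then show ?thesis using interval asm unfolding add_edge_def by blast
  next
    case False
    then have "a = u" "c = v" using asm unfolding add_edge_def by auto
    then show ?thesis using inside_arc asm unfolding add_edge_def by auto
  qed
qed

text \<open>The out-neighbours of u; adding u -> v can only destroy the paths u -> b -> v
  through them, since paths v -> b -> u do not exist.\<close>

definition out_u :: "nat set" where "out_u = {b. E u b}"

lemma finite_out_u: "finite out_u"
  by (rule finite_subset[of _ "{..<n}"]) (auto simp: out_u_def dest: edge_vertices)

lemma lost_paths: "P3_set n E - P3_set n (add_edge E u v) \<subseteq> (\<lambda>b. (u,b,v)) ` out_u"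
proof
  fix t assume t: "t \<in> P3_set n E - P3_set n (add_edge E u v)"
  obtain a b c where abc: "t = (a,b,c)" by (cases t)
  have e: "E a b" "E b c" using t abc by (auto simp: P3_set_def)
  have "(a = u \<and> c = v) \<or> (a = v \<and> c = u)"
    using t abc unfolding P3_set_def add_edge_def by auto
  then have "a = u" "c = v" using e no_path_via by auto
  then show "t \<in> (\<lambda>b. (u,b,v)) ` out_u" using e abc unfolding out_u_def by auto
qed

lemma reflected_paths: "(\<lambda>b. (reflect n u b, u, v)) ` out_u \<subseteq> P3_set n (add_edge E u v)"
proof
  fix t assume "t \<in> (\<lambda>b. (reflect n u b, u, v)) ` out_u"
  then obtain b where eub: "E u b" and t: "t = (reflect n u b, u, v)" by (auto simp: out_u_def)
  define a where "a = reflect n u b"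
  have b: "b < n" "b \<noteq> u" using edge_vertices[OF eub] by auto
  have n0: "n > 0" using n_ge by simp
  have a: "a < n" unfolding a_def by (rule reflect_lt[OF n0])
  have da: "dist_cw n a u = dist_cw n u b" unfolding a_def by (rule dist_reflect[OF n0])
  have dub: "dist_cw n u b < dist_cw n u v" by (rule out_u_short[OF eub])
  have au: "a \<noteq> u" using da b uv by (auto simp: dist_cw_explicit split: if_splits)
  have av: "a \<noteq> v" using da dub alpha_half uv by (auto simp: dist_cw_explicit split: if_splits)
  have "\<not> E u a"
  proof
    assume "E u a"
    from out_u_short[OF this] show False
      using da dub alpha_half a au uv by (auto simp: dist_cw_explicit split: if_splits)
  qed
  then have eau: "E a u" using short_adjacent[OF a uv(1) au] da dub by auto
  have "\<not> E a v"
  proof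
    assume "E a v"
    moreover have "cw_order n a u v"
      using da dub alpha_half a uv au av by (auto simp: cw_order_explicit dist_cw_explicit split: if_splits)
    ultimately show False using interval uv by blast
  qed
  moreover have "\<not> E v a" using no_path_via eau by blast
  ultimately show "t \<in> P3_set n (add_edge E u v)"
    using t eau a au av uv unfolding a_def[symmetric] add_edge_def P3_set_def by auto
qed

abbreviation x :: nat where "x \<equiv> succ_cw n v"

text \<open>The successor x of v differs from u: otherwise alpha = n - 1 > n / 2.\<close>

lemma x_facts: "x < n" "x \<noteq> v" "dist_cw n v x = 1" "x \<noteq> u"
proof -
  show "x < n" "x \<noteq> v" "dist_cw n v x = 1" using succ_cw_facts[OF uv(2)] n_ge by auto
  show "x \<noteq> u" using uv alpha_half n_ge by (auto simp: succ_cw_def dist_cw_explicit split: if_splits)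
qed

lemma not_u_x: "\<not> E u x"
proof
  assume "E u x"
  from out_u_short[OF this] show False
    using uv x_facts alpha_half by (auto simp: succ_cw_def dist_cw_explicit split: if_splits)
qed

text \<open>Case v -> x: the paths r(b) -> u -> v together with u -> v -> x outnumber the lost ones.\<close>

lemma improve_if_v_x:
  assumes evx: "E v x"
  shows "P3t n E < P3t n (add_edge E u v)"
  unfolding P3t_card
proof (rule card_less_by_exchange[OF finite_P3_set lost_paths])
  let ?G = "insert (u,v,x) ((\<lambda>b. (reflect n u b, u, v)) ` out_u)"
  have "(u,v,x) \<in> P3_set n (add_edge E u v)"
    using uv x_facts evx not_u_x no_path_via unfolding add_edge_def P3_set_def by auto
  then show "?G \<subseteq> P3_set n (add_edge E u v)" using reflected_paths by blast
  show "?G \<inter> P3_set n E = {}" using uv by (auto simp: P3_set_def)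
  show "finite ((\<lambda>b. (u,b,v)) ` out_u)" using finite_out_u by simp
  have "inj_on (\<lambda>b. (reflect n u b, u, v)) out_u"
    using inj_on_reflect[of n u] edge_vertices unfolding out_u_def inj_on_def by auto
  then have "card ((\<lambda>b. (reflect n u b, u, v)) ` out_u) = card out_u" by (rule card_image)
  moreover have "card ((\<lambda>b. (u,b,v)) ` out_u) \<le> card out_u" by (rule card_image_le[OF finite_out_u])
  moreover have "(u,v,x) \<notin> (\<lambda>b. (reflect n u b, u, v)) ` out_u" using uv by auto
  ultimately show "card ((\<lambda>b. (u,b,v)) ` out_u) < card ?G" using finite_out_u by simp
qed

text \<open>If v -/-> x, then x -> v is impossible too (u lies between them), so (v,x) is a
  non-edge of length 1; hence alpha = 1 and u has no out-neighbours at all.\<close>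

lemma alpha_one_if_not_v_x: "\<not> E v x \<Longrightarrow> dist_cw n u v = 1"
proof (rule ccontr)
  assume nvx: "\<not> E v x" and "dist_cw n u v \<noteq> 1"
  then have "dist_cw n v x < dist_cw n u v" using uv x_facts by (auto simp: dist_cw_explicit)
  then have "E x v" using short_adjacent[OF uv(2) x_facts(1)] x_facts nvx by auto
  moreover have "cw_order n x u v"
    using uv x_facts by (auto simp: succ_cw_def cw_order_explicit split: if_splits)
  ultimately show False using interval uv by blast
qed

lemma no_out_u_if_not_v_x:
  assumes "\<not> E v x"
  shows "\<not> E u b"
proof
  assume "E u b"
  then have "b < n" "b \<noteq> u" "dist_cw n u b < 1"
    using edge_vertices out_u_short alpha_one_if_not_v_x[OF assms] by auto
  then show False using uv by (auto simp: dist_cw_explicit split: if_splits)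
qed

text \<open>Case v -/-> x with an in-neighbour a of u: adding u -> v loses nothing and gains
  a -> u -> v.\<close>

lemma improve_if_in_u:
  assumes nvx: "\<not> E v x" and eau: "E a u"
  shows "P3t n E < P3t n (add_edge E u v)"
  unfolding P3t_card
proof (rule card_less_by_exchange[OF finite_P3_set _ _ _ finite.emptyI])
  show "P3_set n E - P3_set n (add_edge E u v) \<subseteq> {}"
    using lost_paths no_out_u_if_not_v_x[OF nvx] by (auto simp: out_u_def)
  have a: "a < n" "a \<noteq> u" "a \<noteq> v" using edge_vertices[OF eau] eau uv by auto
  have "\<not> cw_order n a v u" using interval eau uv by blast
  then have "cw_order n a u v" using a uv by (auto simp: cw_order_explicit split: if_splits)
  then have "\<not> E a v" using interval uv by blast
  moreover have "\<not> E v a" using no_path_via eau by blast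
  ultimately show "{(a,u,v)} \<subseteq> P3_set n (add_edge E u v)"
    using a uv eau unfolding add_edge_def P3_set_def by auto
  show "{(a,u,v)} \<inter> P3_set n E = {}" using uv by (auto simp: P3_set_def)
qed simp

text \<open>Case v -/-> x and u has no in-neighbour: then neither u nor v has any incident edge,
  so adding both u -> v and v -> x (two edges of length 1) keeps the digraph admissible,
  creates the path u -> v -> x and loses nothing.\<close>

lemma improve_if_no_in_u:
  assumes nvx: "\<not> E v x" and no_in: "\<And>a. \<not> E a u"
  defines "H \<equiv> add_edge (add_edge E u v) v x"
  shows "admissible n H" "P3t n E < P3t n H"
proof -
  have alpha: "dist_cw n u v = 1" by (rule alpha_one_if_not_v_x[OF nvx])
  have no_out_u: "\<And>b. \<not> E u b" by (rule no_out_u_if_not_v_x[OF nvx])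
  have no_out_v: "\<And>c. \<not> E v c"
  proof
    fix c assume evc: "E v c"
    then have "c < n" "c \<noteq> v" "c \<noteq> x" using edge_vertices nvx by auto
    then show False using cw_order_succ[OF uv(2)] interval evc nvx by blast
  qed
  have no_in_v: "\<And>a. \<not> E a v"
  proof
    fix a assume eav: "E a v"
    then have "a < n" "a \<noteq> v" "a \<noteq> u" using edge_vertices no_out_u by auto
    then have "cw_order n a u v"
      using uv alpha by (auto simp: cw_order_explicit dist_cw_explicit split: if_splits)
    then show False using interval eav no_in by blast
  qed
  show "admissible n H"
  proof (rule admissibleI)
    fix a b assume "H a b"
    then show "a < n \<and> b < n \<and> a \<noteq> b"
      using edge_vertices uv x_facts unfolding H_def add_edge_def by auto
  next
    fix a b assume "H a b"
    then show "\<not> H b a"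
      using antisym no_out_u no_out_v no_in_v no_in uv x_facts unfolding H_def add_edge_def by auto
  next
    fix a b c assume asm: "cw_order n a b c" "H a c"
    show "H a b \<and> H b c"
    proof (cases "E a c")
      case True
      then show ?thesis using interval asm unfolding H_def add_edge_def by blast
    next
      case False
      text \<open>The new edges have length 1, so no vertex lies strictly between their ends.\<close>
      then have "(a = u \<and> c = v) \<or> (a = v \<and> c = x)" using asm unfolding H_def add_edge_def by auto
      moreover have "dist_cw n a b \<ge> 1"
        using asm unfolding cw_order_def by (auto simp: dist_cw_explicit split: if_splits)
      ultimately show ?thesis using asm alpha x_facts unfolding cw_order_def by auto
    qed
  qed
  show "P3t n E < P3t n H"
    unfolding P3t_card
  proof (rule card_less_by_exchange[OF finite_P3_set _ _ _ finite.emptyI])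
    show "P3_set n E - P3_set n H \<subseteq> {}"
      using no_out_u no_out_v no_in_v no_in unfolding H_def add_edge_def P3_set_def by auto
    show "{(u,v,x)} \<subseteq> P3_set n H"
      using uv x_facts no_out_u no_in unfolding H_def add_edge_def P3_set_def by auto
    show "{(u,v,x)} \<inter> P3_set n E = {}" using uv by (auto simp: P3_set_def)
  qed simp
qed

theorem not_P3_maximal: "\<exists>H. admissible n H \<and> P3t n E < P3t n H"
proof (cases "E v x")
  case True
  then show ?thesis using improve_if_v_x add_uv_admissible by blast
next
  case False
  show ?thesis
  proof (cases "\<exists>a. E a u")
    case True
    then show ?thesis using improve_if_in_u[OF False] add_uv_admissible by blast
  next
    case False
    then show ?thesis using improve_if_no_in_u[OF \<open>\<not> E v x\<close>] by blast
  qed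
qed

end

theorem mainTheorem7:
  fixes n :: nat and E :: "nat \<Rightarrow> nat \<Rightarrow> bool" and u v :: nat
  assumes "n \<ge> 4"
    and "optimal n E"
    and "shortest_non_edge n E u v"
  shows "\<exists>w<n. E v w \<and> E w u"
proof (rule ccontr)
  assume "\<not> (\<exists>w<n. E v w \<and> E w u)"
  moreover have "admissible n E" using assms(2) unfolding optimal_def by blast
  ultimately interpret no_return_path n E u v
    using assms(1,3) by unfold_locales auto
  obtain H where "admissible n H" "P3t n E < P3t n H" using not_P3_maximal by blast
  then show False using assms(2) unfolding optimal_def by fastforce
qed

end
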